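(* For all integers $k\geq 1$ and $n\geq 3$ with $(k,n)\neq(1,5)$, $\chi_i(C_{4k}\Box C_n)\leq 6$.
   Context: For a graph $G$, an incidence is a pair $(v,e)$ with $v\in V(G)$, $e\in E(G)$ and $v$ incident with $e$. Two incidences $(v,e)$ and $(w,f)$ are adjacent if $v=w$, or $e=f$, or the edge $vw$ equals $e$ or $f$. An incidence $k$-coloring of $G$ is a map from the set of incidences of $G$ to a set of $k$ colors such that adjacent incidences receive distinct colors; the incidence chromatic number $\chi_i(G)$ is the least such $k$. $C_n$ denotes the cycle on $n$ vertices and $\Box$ the Cartesian product of graphs: $G\Box H$ has vertex set $V(G)\times V(H)$, with $(u_1,v_1)$ adjacent to $(u_2,v_2)$ iff either $u_1=u_2$ and $v_1v_2\in E(H)$, or $v_1=v_2$ and $u_1u_2\in E(G)$. *)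

theory Defs
  imports Main
begin

text \<open>A simple graph is represented by its edge set: a set of 2-element vertex sets.
Incidences only depend on the edges.\<close>

definition incidences :: "'a set set \<Rightarrow> ('a \<times> 'a set) set" where
  "incidences E = {(v, e). e \<in> E \<and> v \<in> e}"

definition adjacent_incidences :: "'a \<times> 'a set \<Rightarrow> 'a \<times> 'a set \<Rightarrow> bool" where
  "adjacent_incidences p q =
     (case p of (v, e) \<Rightarrow> case q of (w, f) \<Rightarrow>
        v = w \<or> e = f \<or> {v, w} = e \<or> {v, w} = f)"

definition incidence_coloring :: "'a set set \<Rightarrow> nat \<Rightarrow> ('a \<times> 'a set \<Rightarrow> nat) \<Rightarrow> bool" where
  "incidence_coloring E k c \<longleftrightarrow>
     (\<forall>p \<in> incidences E. c p < k) \<and>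
     (\<forall>p \<in> incidences E. \<forall>q \<in> incidences E.
        p \<noteq> q \<and> adjacent_incidences p q \<longrightarrow> c p \<noteq> c q)"

definition incidence_chromatic_number :: "'a set set \<Rightarrow> nat" where
  "incidence_chromatic_number E = (LEAST k. \<exists>c. incidence_coloring E k c)"

text \<open>The cycle C_n on vertex set {0..<n} (meaningful for n >= 3).\<close>
definition cycle_edges :: "nat \<Rightarrow> nat set set" where
  "cycle_edges n = {{i, Suc i mod n} | i. i < n}"

definition cart_prod_edges ::
  "'a set \<Rightarrow> 'a set set \<Rightarrow> 'b set \<Rightarrow> 'b set set \<Rightarrow> ('a \<times> 'b) set set" where
  "cart_prod_edges V1 E1 V2 E2 =
     {{(u, v), (u, v')} | u v v'. u \<in> V1 \<and> {v, v'} \<in> E2} \<union>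
     {{(u, v), (u', v)} | u u' v. {u, u'} \<in> E1 \<and> v \<in> V2}"

end

theory Submission
  imports Defs
begin

text \<open>Colour each incidence \<open>(v, {v, w})\<close> of the torus \<open>C\<^sub>m \<box> C\<^sub>n\<close> by a colour depending
  only on \<open>v\<close> and on the direction (one of four) in which \<open>w\<close> lies. This is a proper incidence
  colouring as soon as the four directions at every vertex get distinct colours and the colour of
  \<open>(v, {v, w})\<close> differs from the four colours at \<open>w\<close>. Such local colourings with six colours are
  obtained from finitely many tiles: for \<open>m = 4k\<close> and \<open>n = 3p + 4q\<close> the colouring is 4-periodic
  along the rows and assembled from blocks of three and four columns; for \<open>n = 5\<close> and \<open>k \<ge> 2\<close>,
  i.e. \<open>4k = 8a + 12b\<close>, it is assembled from blocks of eight and twelve rows. The finitely many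
  compatibility conditions between neighbouring tiles are checked by evaluation.\<close>

definition torus_nbr :: "nat \<Rightarrow> nat \<Rightarrow> nat \<times> nat \<Rightarrow> nat \<Rightarrow> nat \<times> nat" where
  "torus_nbr m n v d =
     (case v of (i, j) \<Rightarrow>
        if d = 0 then (Suc i mod m, j)
        else if d = 1 then ((if i = 0 then m else i) - 1, j)
        else if d = 2 then (i, Suc j mod n)
        else (i, (if j = 0 then n else j) - 1))"

abbreviation torus :: "nat \<Rightarrow> nat \<Rightarrow> (nat \<times> nat) set set" where
  "torus m n \<equiv> cart_prod_edges {..<m} (cycle_edges m) {..<n} (cycle_edges n)"

lemma Suc_mod_cycle_pred: "(i::nat) < m \<Longrightarrow> Suc ((if i = 0 then m else i) - 1) mod m = i"
  by auto

lemma torus_nbr_neq: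
  "3 \<le> m \<Longrightarrow> 3 \<le> n \<Longrightarrow> v \<in> {..<m} \<times> {..<n} \<Longrightarrow> torus_nbr m n v d \<noteq> v"
  by (auto simp: torus_nbr_def mod_Suc split: if_splits)

lemma torus_nbr_inj:
  assumes "3 \<le> m" "3 \<le> n" "v \<in> {..<m} \<times> {..<n}" "d < 4" "d' < 4"
    and "torus_nbr m n v d = torus_nbr m n v d'"
  shows "d = d'"
  using assms by (auto simp: torus_nbr_def mod_Suc split: if_splits)

lemma incidence_torusE:
  assumes "p \<in> incidences (torus m n)"
  obtains v d where "p = (v, {v, torus_nbr m n v d})" "v \<in> {..<m} \<times> {..<n}" "d < 4"
proof -
  obtain v e where p: "p = (v, e)" "v \<in> e" "e \<in> torus m n"
    using assms by (auto simp: incidences_def)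
  then consider
      (vertical) i j where "i < m" "j < n" "e = {(i, j), (i, Suc j mod n)}"
    | (horizontal) i j where "i < m" "j < n" "e = {(i, j), (Suc i mod m, j)}"
    by (auto simp: cart_prod_edges_def cycle_edges_def doubleton_eq_iff)
  then show thesis
  proof cases
    case vertical
    moreover have "torus_nbr m n (i, j) 2 = (i, Suc j mod n)"
      "torus_nbr m n (i, Suc j mod n) 3 = (i, j)"
      using vertical by (auto simp: torus_nbr_def mod_Suc)
    ultimately show thesis
      using p that[of v 2] that[of "(i, Suc j mod n)" 3] by (auto simp: insert_commute)
  next
    case horizontal
    moreover have "torus_nbr m n (i, j) 0 = (Suc i mod m, j)"
      "torus_nbr m n (Suc i mod m, j) 1 = (i, j)"
      using horizontal by (auto simp: torus_nbr_def mod_Suc)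
    ultimately show thesis
      using p that[of v 0] that[of "(Suc i mod m, j)" 1] by (auto simp: insert_commute)
  qed
qed

text \<open>Here \<open>col v d\<close> is the colour of the incidence \<open>(v, {v, w})\<close> with \<open>w\<close> the neighbour of \<open>v\<close>
  in direction \<open>d\<close>; the last condition is the adjacency of this incidence to all incidences at \<open>w\<close>.\<close>

definition torus_local_colouring ::
  "nat \<Rightarrow> nat \<Rightarrow> nat \<Rightarrow> (nat \<times> nat \<Rightarrow> nat \<Rightarrow> nat) \<Rightarrow> bool" where
  "torus_local_colouring m n c col \<longleftrightarrow>
     (\<forall>v \<in> {..<m} \<times> {..<n}. \<forall>d<4. col v d < c \<and>
        (\<forall>d'<4. (d \<noteq> d' \<longrightarrow> col v d \<noteq> col v d') \<and> col v d \<noteq> col (torus_nbr m n v d) d'))"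

definition direction_colouring ::
  "nat \<Rightarrow> nat \<Rightarrow> (nat \<times> nat \<Rightarrow> nat \<Rightarrow> nat) \<Rightarrow> (nat \<times> nat) \<times> (nat \<times> nat) set \<Rightarrow> nat" where
  "direction_colouring m n col =
     (\<lambda>(v, e). col v (THE d. d < 4 \<and> e = {v, torus_nbr m n v d}))"

lemma torus_local_colouringD:
  assumes "torus_local_colouring m n c col" "v \<in> {..<m} \<times> {..<n}" "d < 4" "d' < 4"
  shows "col v d < c" "d \<noteq> d' \<Longrightarrow> col v d \<noteq> col v d'" "col v d \<noteq> col (torus_nbr m n v d) d'"
  using assms unfolding torus_local_colouring_def by blast+

lemma direction_colouring_eq:
  assumes "3 \<le> m" "3 \<le> n" "v \<in> {..<m} \<times> {..<n}" "d < 4"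
  shows "direction_colouring m n col (v, {v, torus_nbr m n v d}) = col v d"
proof -
  have "d = d'" if "d' < 4" "{v, torus_nbr m n v d} = {v, torus_nbr m n v d'}" for d'
  proof -
    have "torus_nbr m n v d = torus_nbr m n v d'"
      using that(2) torus_nbr_neq[OF assms(1-3), of d] torus_nbr_neq[OF assms(1-3), of d']
      by (auto simp: doubleton_eq_iff)
    then show ?thesis
      using torus_nbr_inj[OF assms that(1)] by simp
  qed
  then have "(THE d'. d' < 4 \<and> {v, torus_nbr m n v d} = {v, torus_nbr m n v d'}) = d"
    using assms(4) by (intro the_equality) blast+
  then show ?thesis
    by (simp add: direction_colouring_def)
qed

lemma incidence_chromatic_number_torus_le:
  assumes "3 \<le> m" "3 \<le> n" and col: "torus_local_colouring m n c col"
  shows "incidence_chromatic_number (torus m n) \<le> c"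
proof -
  let ?c = "direction_colouring m n col"
  have "incidence_coloring (torus m n) c ?c"
    unfolding incidence_coloring_def
  proof (intro conjI ballI impI)
    fix p assume "p \<in> incidences (torus m n)"
    then obtain v d where "p = (v, {v, torus_nbr m n v d})" "v \<in> {..<m} \<times> {..<n}" "d < 4"
      by (rule incidence_torusE)
    then show "?c p < c"
      using direction_colouring_eq[OF assms(1,2)] torus_local_colouringD(1)[OF col] by simp
  next
    fix p q
    assume "p \<in> incidences (torus m n)" "q \<in> incidences (torus m n)"
      and pq: "p \<noteq> q \<and> adjacent_incidences p q"
    obtain v d where p: "p = (v, {v, torus_nbr m n v d})" "v \<in> {..<m} \<times> {..<n}" "d < 4"
      using \<open>p \<in> incidences (torus m n)\<close> by (rule incidence_torusE)
    obtain w d' where q: "q = (w, {w, torus_nbr m n w d'})" "w \<in> {..<m} \<times> {..<n}" "d' < 4"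
      using \<open>q \<in> incidences (torus m n)\<close> by (rule incidence_torusE)
    have "v = w \<and> d \<noteq> d' \<or> w = torus_nbr m n v d \<or> v = torus_nbr m n w d'"
      using pq p(1,2) q(1,2) torus_nbr_neq[OF assms(1,2)]
      by (auto simp: adjacent_incidences_def doubleton_eq_iff)
    then have "col v d \<noteq> col w d'"
      using torus_local_colouringD(2,3)[OF col p(2,3) q(3)] torus_local_colouringD(3)[OF col q(2,3) p(3)]
      by auto
    then show "?c p \<noteq> ?c q"
      using p q direction_colouring_eq[OF assms(1,2)] by simp
  qed
  then show ?thesis
    unfolding incidence_chromatic_number_def by (blast intro: Least_le)
qed

definition closed_walk :: "('a \<times> 'a) set \<Rightarrow> nat \<Rightarrow> (nat \<Rightarrow> 'a) \<Rightarrow> bool" where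
  "closed_walk R L w \<longleftrightarrow> (\<forall>i<L. (w i, w (Suc i mod L)) \<in> R)"

lemma closed_walk_step_mod:
  "closed_walk R L w \<Longrightarrow> 0 < L \<Longrightarrow> (w (j mod L), w (Suc j mod L)) \<in> R"
  unfolding closed_walk_def by (metis mod_Suc_eq mod_less_divisor)

lemma closed_walk_last_step: "closed_walk R L w \<Longrightarrow> 0 < L \<Longrightarrow> (w (L - 1), w 0) \<in> R"
  using closed_walk_step_mod[of R L w "L - 1"] by simp

lemma closed_walk_repeat:
  assumes "closed_walk R L w"
  shows "closed_walk R (L * p) (\<lambda>i. w (i mod L))"
  unfolding closed_walk_def
proof (intro allI impI)
  fix i assume "i < L * p"
  then have "0 < L" by (cases "L = 0") auto
  moreover have "Suc i mod (L * p) mod L = Suc i mod L"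
    by (simp add: mod_mod_cancel)
  ultimately show "(w (i mod L), w (Suc i mod (L * p) mod L)) \<in> R"
    using closed_walk_step_mod[OF assms] by simp
qed

lemma mod_eq_pred_if_Suc_mod_eq_0: "0 < (L::nat) \<Longrightarrow> Suc j mod L = 0 \<Longrightarrow> j mod L = L - 1"
  by (auto simp: mod_Suc split: if_splits)

lemma closed_walk_wind:
  assumes u: "closed_walk R L u" and w: "closed_walk R M w"
    and uw: "(u (L - 1), w 0) \<in> R" and wu: "(w (M - 1), u 0) \<in> R"
  shows "closed_walk R (L * p + M * q)
           (\<lambda>j. if j < L * p then u (j mod L) else w ((j - L * p) mod M))"
  unfolding closed_walk_def
proof (intro allI impI)
  fix j assume j: "j < L * p + M * q"
  let ?N = "L * p + M * q"
  let ?f = "\<lambda>j. if j < L * p then u (j mod L) else w ((j - L * p) mod M)"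
  consider "Suc j < L * p" | "Suc j = L * p" | "L * p \<le> j" "Suc j < ?N" | "L * p \<le> j" "Suc j = ?N"
    using j by linarith
  then show "(?f j, ?f (Suc j mod ?N)) \<in> R"
  proof cases
    case 1
    then show ?thesis
      using closed_walk_step_mod[OF u, of j] by (cases "L = 0") auto
  next
    case 2
    then have "0 < L" by (cases "L = 0") auto
    with 2 have "j mod L = L - 1"
      using mod_eq_pred_if_Suc_mod_eq_0[of L j] by simp
    moreover have "(u (L - 1), u 0) \<in> R"
      using closed_walk_last_step[OF u \<open>0 < L\<close>] .
    ultimately show ?thesis
      using 2 uw by (cases "M * q = 0") auto
  next
    case 3
    then have "0 < M" "Suc j - L * p = Suc (j - L * p)"
      by (auto intro: Nat.gr0I)
    then show ?thesis
      using 3 closed_walk_step_mod[OF w, of "j - L * p"] by simp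
  next
    case 4
    then have "0 < M" "Suc (j - L * p) = M * q"
      by (auto intro: Nat.gr0I)
    then have "(j - L * p) mod M = M - 1"
      using mod_eq_pred_if_Suc_mod_eq_0[of M "j - L * p"] by simp
    moreover have "(w (M - 1), w 0) \<in> R"
      using closed_walk_last_step[OF w \<open>0 < M\<close>] .
    ultimately show ?thesis
      using 4 wu by (cases "L * p = 0") auto
  qed
qed

text \<open>\<open>T!a!b!d\<close> is the colour towards direction \<open>d\<close> at a vertex of row type \<open>a\<close> and column type
  \<open>b\<close>. The lists \<open>R\<close> and \<open>S\<close> contain the admissible pairs of consecutive row and column types;
  the types themselves are the first components of these pairs.\<close>

definition valid_tile_table ::
  "nat \<Rightarrow> nat list list list \<Rightarrow> (nat \<times> nat) list \<Rightarrow> (nat \<times> nat) list \<Rightarrow> bool" where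
  "valid_tile_table c T R S \<longleftrightarrow>
     (\<forall>a \<in> fst ` set R. \<forall>b \<in> fst ` set S. \<forall>d<4.
        T!a!b!d < c \<and> (\<forall>d'<4. d \<noteq> d' \<longrightarrow> T!a!b!d \<noteq> T!a!b!d')) \<and>
     (\<forall>(a, a') \<in> set R. \<forall>b \<in> fst ` set S. \<forall>d<4. T!a!b!0 \<noteq> T!a'!b!d \<and> T!a'!b!1 \<noteq> T!a!b!d) \<and>
     (\<forall>(b, b') \<in> set S. \<forall>a \<in> fst ` set R. \<forall>d<4. T!a!b!2 \<noteq> T!a!b'!d \<and> T!a!b'!3 \<noteq> T!a!b!d)"

lemma torus_local_colouring_tiles:
  assumes T: "valid_tile_table c T R S"
    and r: "closed_walk (set R) m r" and s: "closed_walk (set S) n s"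
  shows "torus_local_colouring m n c (\<lambda>(i, j) d. T ! r i ! s j ! d)"
  unfolding torus_local_colouring_def
proof (intro ballI allI impI conjI)
  have vertex: "T!a!b!d < c" "d \<noteq> d' \<Longrightarrow> T!a!b!d \<noteq> T!a!b!d'"
    if "a \<in> fst ` set R" "b \<in> fst ` set S" "d < 4" "d' < 4" for a b d d'
    using T that unfolding valid_tile_table_def by blast+
  have row_step: "T!a!b!0 \<noteq> T!a'!b!d" "T!a'!b!1 \<noteq> T!a!b!d"
    if "(a, a') \<in> set R" "b \<in> fst ` set S" "d < 4" for a a' b d
    using T that unfolding valid_tile_table_def by blast+
  have col_step: "T!a!b!2 \<noteq> T!a!b'!d" "T!a!b'!3 \<noteq> T!a!b!d"
    if "(b, b') \<in> set S" "a \<in> fst ` set R" "d < 4" for a b b' d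
    using T that unfolding valid_tile_table_def by blast+
  fix v and d d' :: nat assume v: "v \<in> {..<m} \<times> {..<n}" and d: "d < 4" and d': "d' < 4"
  obtain i j where ij: "v = (i, j)" "i < m" "j < n" using v by blast
  have "(if i = 0 then m else i) - 1 < m" "(if j = 0 then n else j) - 1 < n"
    using ij by auto
  then have rows: "(r i, r (Suc i mod m)) \<in> set R" "(r ((if i = 0 then m else i) - 1), r i) \<in> set R"
    and cols: "(s j, s (Suc j mod n)) \<in> set S" "(s ((if j = 0 then n else j) - 1), s j) \<in> set S"
    using r s ij Suc_mod_cycle_pred[of i m] Suc_mod_cycle_pred[of j n]
    unfolding closed_walk_def by metis+
  have types: "r i \<in> fst ` set R" "s j \<in> fst ` set S"
    using rows(1) cols(1) by force+
  show "(\<lambda>(i, j) d. T ! r i ! s j ! d) v d < c"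
    using vertex(1)[OF types d d] ij by simp
  show "(\<lambda>(i, j) d. T ! r i ! s j ! d) v d \<noteq> (\<lambda>(i, j) d. T ! r i ! s j ! d) v d'"
    if "d \<noteq> d'"
    using vertex(2)[OF types d d' that] ij by simp
  consider "d = 0" | "d = 1" | "d = 2" | "d = 3"
    using d by linarith
  then show "(\<lambda>(i, j) d. T ! r i ! s j ! d) v d \<noteq>
      (\<lambda>(i, j) d. T ! r i ! s j ! d) (torus_nbr m n v d) d'"
  proof cases
    case 1
    then show ?thesis using row_step(1)[OF rows(1) types(2) d'] ij by (simp add: torus_nbr_def)
  next
    case 2
    then show ?thesis using row_step(2)[OF rows(2) types(2) d'] ij by (simp add: torus_nbr_def)
  next
    case 3
    then show ?thesis using col_step(1)[OF cols(1) types(1) d'] ij by (simp add: torus_nbr_def)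
  next
    case 4
    then show ?thesis using col_step(2)[OF cols(2) types(1) d'] ij by (simp add: torus_nbr_def)
  qed
qed

definition cycle_pairs :: "nat \<Rightarrow> (nat \<times> nat) list" where
  "cycle_pairs L = map (\<lambda>i. (i, Suc i mod L)) [0..<L]"

lemma closed_walk_cycle_pairs: "closed_walk (set (cycle_pairs L)) L (\<lambda>i. i)"
  by (auto simp: closed_walk_def cycle_pairs_def)

text \<open>Row types \<open>0..3\<close> repeat along \<open>C\<^sub>4\<^sub>k\<close>; the column types \<open>0, 1, 2\<close> form a block of three
  columns and \<open>3..6\<close> a block of four, and blocks may follow each other in any order.\<close>

definition column_moves_3_4 :: "(nat \<times> nat) list" where
  "column_moves_3_4 = [(0,1),(1,2),(2,0),(2,3),(3,4),(4,5),(5,6),(6,3),(6,0)]"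

definition tile_table_4_by_3_4 :: "nat list list list" where
  "tile_table_4_by_3_4 =
   [[[1,0,4,3],[5,1,3,2],[1,4,2,0],[1,0,4,3],[1,3,2,5],[5,1,3,4],[5,4,2,0]],
    [[3,5,2,0],[3,4,0,1],[5,3,4,2],[3,2,5,0],[2,0,3,4],[4,2,0,1],[2,1,4,3]],
    [[2,1,4,5],[5,2,1,0],[2,0,3,4],[2,1,0,5],[1,5,4,3],[5,3,2,0],[4,0,3,1]],
    [[5,3,1,4],[0,3,4,2],[3,5,0,1],[5,3,1,4],[4,0,5,2],[2,4,0,3],[3,5,2,1]]]"

text \<open>For \<open>n = 5\<close> the roles are swapped: the column types follow \<open>C\<^sub>5\<close>, and the row types
  \<open>0..7\<close> form a block of eight rows, \<open>0..11\<close> a block of twelve rows sharing its first eight types.\<close>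

definition row_moves_8_12 :: "(nat \<times> nat) list" where
  "row_moves_8_12 = [(0,1),(1,2),(2,3),(3,4),(4,5),(5,6),(6,7),(7,0),(7,8),(8,9),(9,10),(10,11),(11,0)]"

definition tile_table_8_12_by_5 :: "nat list list list" where
  "tile_table_8_12_by_5 =
   [[[0,1,2,3],[1,3,0,5],[5,1,3,2],[2,4,5,0],[0,2,4,1]],
    [[5,4,2,1],[5,4,0,3],[3,4,2,1],[4,3,1,0],[4,5,3,2]],
    [[2,0,1,4],[0,2,4,3],[1,0,2,5],[1,5,0,3],[3,1,5,2]],
    [[0,5,3,4],[4,1,5,2],[2,4,3,0],[0,2,4,5],[5,0,2,1]],
    [[5,2,1,4],[2,3,5,0],[3,1,0,4],[1,3,4,5],[1,3,0,2]],
    [[4,3,2,1],[5,1,3,0],[1,5,2,4],[5,0,4,3],[3,5,0,2]],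
    [[1,0,5,2],[3,2,1,4],[3,0,4,5],[0,2,3,1],[0,1,4,5]],
    [[4,3,5,0],[4,0,1,2],[4,2,0,5],[1,5,2,3],[5,3,1,4]],
    [[2,1,5,3],[1,3,2,0],[0,3,1,5],[3,0,5,4],[1,0,4,2]],
    [[5,0,3,1],[0,5,4,2],[3,2,5,1],[1,2,0,4],[2,5,4,3]],
    [[1,4,0,2],[2,1,3,5],[5,4,2,0],[0,5,4,3],[3,0,5,1]],
    [[4,5,3,2],[4,0,5,1],[4,3,0,2],[1,2,3,5],[5,4,1,0]]]"

lemma valid_tile_table_4_by_3_4:
  "valid_tile_table 6 tile_table_4_by_3_4 (cycle_pairs 4) column_moves_3_4"
  by code_simp

lemma valid_tile_table_8_12_by_5:
  "valid_tile_table 6 tile_table_8_12_by_5 row_moves_8_12 (cycle_pairs 5)"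
  by code_simp

lemma closed_walk_column_moves_3_4:
  "closed_walk (set column_moves_3_4) (3 * p + 4 * q)
     (\<lambda>j. if j < 3 * p then j mod 3 else 3 + (j - 3 * p) mod 4)"
proof -
  have "closed_walk (set column_moves_3_4) 3 (\<lambda>i. i)"
    and "closed_walk (set column_moves_3_4) 4 (\<lambda>i. 3 + i)"
    by code_simp+
  then show ?thesis
    using closed_walk_wind[of "set column_moves_3_4" 3 "\<lambda>i. i" 4 "\<lambda>i. 3 + i" p q]
    by (simp add: column_moves_3_4_def)
qed

lemma closed_walk_row_moves_8_12:
  "closed_walk (set row_moves_8_12) (8 * a + 12 * b)
     (\<lambda>i. if i < 8 * a then i mod 8 else (i - 8 * a) mod 12)"
proof -
  have "closed_walk (set row_moves_8_12) 8 (\<lambda>i. i)"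
    and "closed_walk (set row_moves_8_12) 12 (\<lambda>i. i)"
    by code_simp+
  then show ?thesis
    using closed_walk_wind[of "set row_moves_8_12" 8 "\<lambda>i. i" 12 "\<lambda>i. i" a b]
    by (simp add: row_moves_8_12_def)
qed

theorem lemma2:
  fixes k n :: nat
  assumes "k \<ge> 1" and "n \<ge> 3" and "(k, n) \<noteq> (1, 5)"
  shows "incidence_chromatic_number
           (cart_prod_edges {..<4*k} (cycle_edges (4*k)) {..<n} (cycle_edges n)) \<le> 6"
proof (cases "n = 5")
  case False
  with assms(2) have "\<exists>p q. n = 3 * p + 4 * q"
    by presburger
  then obtain p q where n: "n = 3 * p + 4 * q"
    by blast
  have "closed_walk (set (cycle_pairs 4)) (4 * k) (\<lambda>i. i mod 4)"
    using closed_walk_repeat[OF closed_walk_cycle_pairs] .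
  from torus_local_colouring_tiles
      [OF valid_tile_table_4_by_3_4 this closed_walk_column_moves_3_4[of p q]]
  show ?thesis
    using incidence_chromatic_number_torus_le[of "4 * k" n] assms(1,2) n by simp
next
  case True
  with assms have "k \<ge> 2"
    by auto
  then have "\<exists>a b. k = 2 * a + 3 * b"
    by presburger
  then obtain a b where "4 * k = 8 * a + 12 * b"
    by auto
  from torus_local_colouring_tiles
      [OF valid_tile_table_8_12_by_5 closed_walk_row_moves_8_12[of a b] closed_walk_cycle_pairs]
  show ?thesis
    using incidence_chromatic_number_torus_le assms(1) True \<open>4 * k = 8 * a + 12 * b\<close> by simp
qed

end
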